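(* Let $\mathcal C$ be an additive strict symmetric ribbon category and $(L,\ell)$ a Lie algebra in $\mathcal C$ whose Killing form $\kappa$ is non-degenerate. If $(K,e,r)$ is an Abelian retract ideal of $L$ (i.e. a retract ideal with $\ell\circ(e\otimes e)=0$), then $e=0$, i.e. $K$ is the zero object.
   Context: $\mathcal C$ is additive, strict monoidal, with symmetric braiding $c$, rigid, with twist $\theta$, right duality $b_U:\mathbf 1\to U\otimes U^\vee$, $d_U$, left duality $\tilde b_U$, $\tilde d_U:U\otimes{}^\vee U\to\mathbf 1$, and the induced sovereign structure $\sigma_U:U^\vee\to{}^\vee U$. A Lie algebra is $(L,\ell)$ with $\ell\circ(\mathrm{id}+c_{L,L})=0$ and $\ell^{(3)}\circ[\mathrm{id}+c_{L\otimes L,L}+(c_{L\otimes L,L})^2]=0$, $\ell^{(3)}:=\ell\circ(\mathrm{id}_L\otimes\ell)$. Killing form: $\kappa:=\tilde d_L\circ([\theta_L\circ\ell^{(3)}]\otimes\sigma_L)\circ(\mathrm{id}_{L\otimes L}\otimes b_L)\in\mathrm{Hom}(L\otimes L,\mathbf 1)$. A pairing $\varpi\in\mathrm{Hom}(U\otimes U,\mathbf 1)$ is non-degenerate iff there is $\varpi^-\in\mathrm{Hom}(\mathbf 1,U\otimes U)$ with $(\varpi\otimes\mathrm{id}_U)\circ(\mathrm{id}_U\otimes\varpi^-)=\mathrm{id}_U=(\mathrm{id}_U\otimes\varpi)\circ(\varpi^-\otimes\mathrm{id}_U)$. A retract of $L$ is $(K,e,r)$ with $r\circ e=\mathrm{id}_K$;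 with $p=e\circ r$, it is a retract ideal iff $\ell\circ(e\otimes\mathrm{id}_L)=p\circ\ell\circ(e\otimes\mathrm{id}_L)$. *)

theory Defs
  imports Main
begin

text \<open>
  An (additive, strict, symmetric, ribbon) category is encoded by a record of
  operations on a type of objects 'o and a type of morphisms 'm (every element
  of 'm is a morphism, with source cdom and target ccod).  ccomp g f is g after f.
\<close>

record ('o, 'm) rcat =
  cdom   :: "'m \<Rightarrow> 'o"
  ccod   :: "'m \<Rightarrow> 'o"
  ccomp  :: "'m \<Rightarrow> 'm \<Rightarrow> 'm"
  cid    :: "'o \<Rightarrow> 'm"
  tobj   :: "'o \<Rightarrow> 'o \<Rightarrow> 'o"
  tmor   :: "'m \<Rightarrow> 'm \<Rightarrow> 'm"
  cunit  :: "'o"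
  cadd   :: "'m \<Rightarrow> 'm \<Rightarrow> 'm"
  czero  :: "'o \<Rightarrow> 'o \<Rightarrow> 'm"
  cneg   :: "'m \<Rightarrow> 'm"
  cbr    :: "'o \<Rightarrow> 'o \<Rightarrow> 'm"
  ctw    :: "'o \<Rightarrow> 'm"
  rdual  :: "'o \<Rightarrow> 'o"
  rcoev  :: "'o \<Rightarrow> 'm"
  revd   :: "'o \<Rightarrow> 'm"
  ldual  :: "'o \<Rightarrow> 'o"
  lcoev  :: "'o \<Rightarrow> 'm"
  lev    :: "'o \<Rightarrow> 'm"

definition hom :: "('o,'m) rcat \<Rightarrow> 'o \<Rightarrow> 'o \<Rightarrow> 'm set" where
  "hom C A B = {f. cdom C f = A \<and> ccod C f = B}"

definition dual_mor :: "('o,'m) rcat \<Rightarrow> 'm \<Rightarrow> 'm" where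
  "dual_mor C f = (let U = cdom C f; V = ccod C f in
     ccomp C (tmor C (revd C V) (cid C (rdual C U)))
       (ccomp C (tmor C (cid C (rdual C V)) (tmor C f (cid C (rdual C U))))
          (tmor C (cid C (rdual C V)) (rcoev C U))))"

locale add_strict_sym_ribbon_cat =
  fixes C :: "('o,'m) rcat"
  assumes
    id_hom: "cid C A \<in> hom C A A"
  and comp_hom: "f \<in> hom C A B \<Longrightarrow> g \<in> hom C B D \<Longrightarrow> ccomp C g f \<in> hom C A D"
  and comp_id_r: "ccomp C f (cid C (cdom C f)) = f"
  and comp_id_l: "ccomp C (cid C (ccod C f)) f = f"
  and comp_assoc: "f \<in> hom C A B \<Longrightarrow> g \<in> hom C B D \<Longrightarrow> h \<in> hom C D E \<Longrightarrow>
                     ccomp C h (ccomp C g f) = ccomp C (ccomp C h g) f"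
  and tmor_hom: "f \<in> hom C A B \<Longrightarrow> g \<in> hom C A' B' \<Longrightarrow>
                   tmor C f g \<in> hom C (tobj C A A') (tobj C B B')"
  and tmor_id: "tmor C (cid C A) (cid C B) = cid C (tobj C A B)"
  and interchange: "f \<in> hom C A B \<Longrightarrow> f' \<in> hom C B D \<Longrightarrow> g \<in> hom C A' B' \<Longrightarrow> g' \<in> hom C B' D' \<Longrightarrow>
        tmor C (ccomp C f' f) (ccomp C g' g) = ccomp C (tmor C f' g') (tmor C f g)"
  and tobj_assoc: "tobj C (tobj C A B) D = tobj C A (tobj C B D)"
  and tobj_unit_l: "tobj C (cunit C) A = A"
  and tobj_unit_r: "tobj C A (cunit C) = A"
  and tmor_assoc: "tmor C (tmor C f g) h = tmor C f (tmor C g h)"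
  and tmor_unit_l: "tmor C (cid C (cunit C)) f = f"
  and tmor_unit_r: "tmor C f (cid C (cunit C)) = f"
  and add_hom: "f \<in> hom C A B \<Longrightarrow> g \<in> hom C A B \<Longrightarrow> cadd C f g \<in> hom C A B"
  and zero_hom: "czero C A B \<in> hom C A B"
  and neg_hom: "f \<in> hom C A B \<Longrightarrow> cneg C f \<in> hom C A B"
  and add_assoc: "f \<in> hom C A B \<Longrightarrow> g \<in> hom C A B \<Longrightarrow> h \<in> hom C A B \<Longrightarrow>
                    cadd C (cadd C f g) h = cadd C f (cadd C g h)"
  and add_comm: "f \<in> hom C A B \<Longrightarrow> g \<in> hom C A B \<Longrightarrow> cadd C f g = cadd C g f"
  and add_zero: "f \<in> hom C A B \<Longrightarrow> cadd C f (czero C A B) = f"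
  and add_neg: "f \<in> hom C A B \<Longrightarrow> cadd C f (cneg C f) = czero C A B"
  and comp_add_l: "f \<in> hom C A B \<Longrightarrow> g \<in> hom C A B \<Longrightarrow> h \<in> hom C B D \<Longrightarrow>
                     ccomp C h (cadd C f g) = cadd C (ccomp C h f) (ccomp C h g)"
  and comp_add_r: "f \<in> hom C B D \<Longrightarrow> g \<in> hom C B D \<Longrightarrow> h \<in> hom C A B \<Longrightarrow>
                     ccomp C (cadd C f g) h = cadd C (ccomp C f h) (ccomp C g h)"
  and tmor_add_l: "f \<in> hom C A B \<Longrightarrow> g \<in> hom C A B \<Longrightarrow>
                     tmor C (cadd C f g) h = cadd C (tmor C f h) (tmor C g h)"
  and tmor_add_r: "f \<in> hom C A B \<Longrightarrow> g \<in> hom C A B \<Longrightarrow>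
                     tmor C h (cadd C f g) = cadd C (tmor C h f) (tmor C h g)"
  and zero_object: "\<exists>Z. cid C Z = czero C Z Z"
  and biproducts: "\<exists>S i1 i2 p1 p2. i1 \<in> hom C A S \<and> i2 \<in> hom C B S \<and>
        p1 \<in> hom C S A \<and> p2 \<in> hom C S B \<and>
        ccomp C p1 i1 = cid C A \<and> ccomp C p2 i2 = cid C B \<and>
        ccomp C p1 i2 = czero C B A \<and> ccomp C p2 i1 = czero C A B \<and>
        cadd C (ccomp C i1 p1) (ccomp C i2 p2) = cid C S"
  and br_hom: "cbr C A B \<in> hom C (tobj C A B) (tobj C B A)"
  and br_nat: "f \<in> hom C A A' \<Longrightarrow> g \<in> hom C B B' \<Longrightarrow>
        ccomp C (cbr C A' B') (tmor C f g) = ccomp C (tmor C g f) (cbr C A B)"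
  and br_hex1: "cbr C (tobj C A B) D =
        ccomp C (tmor C (cbr C A D) (cid C B)) (tmor C (cid C A) (cbr C B D))"
  and br_hex2: "cbr C A (tobj C B D) =
        ccomp C (tmor C (cid C B) (cbr C A D)) (tmor C (cbr C A B) (cid C D))"
  and br_sym: "ccomp C (cbr C B A) (cbr C A B) = cid C (tobj C A B)"
  and rcoev_hom: "rcoev C U \<in> hom C (cunit C) (tobj C U (rdual C U))"
  and rev_hom: "revd C U \<in> hom C (tobj C (rdual C U) U) (cunit C)"
  and rsnake1: "ccomp C (tmor C (cid C U) (revd C U)) (tmor C (rcoev C U) (cid C U)) = cid C U"
  and rsnake2: "ccomp C (tmor C (revd C U) (cid C (rdual C U))) (tmor C (cid C (rdual C U)) (rcoev C U))
                  = cid C (rdual C U)"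
  and lcoev_hom: "lcoev C U \<in> hom C (cunit C) (tobj C (ldual C U) U)"
  and lev_hom: "lev C U \<in> hom C (tobj C U (ldual C U)) (cunit C)"
  and lsnake1: "ccomp C (tmor C (lev C U) (cid C U)) (tmor C (cid C U) (lcoev C U)) = cid C U"
  and lsnake2: "ccomp C (tmor C (cid C (ldual C U)) (lev C U)) (tmor C (lcoev C U) (cid C (ldual C U)))
                  = cid C (ldual C U)"
  and tw_hom: "ctw C A \<in> hom C A A"
  and tw_iso: "\<exists>g \<in> hom C A A. ccomp C g (ctw C A) = cid C A \<and> ccomp C (ctw C A) g = cid C A"
  and tw_nat: "f \<in> hom C A B \<Longrightarrow> ccomp C (ctw C B) f = ccomp C f (ctw C A)"
  and tw_tensor: "ctw C (tobj C A B) =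
        ccomp C (ccomp C (cbr C B A) (cbr C A B)) (tmor C (ctw C A) (ctw C B))"
  and tw_dual: "dual_mor C (ctw C A) = ctw C (rdual C A)"

definition sov :: "('o,'m) rcat \<Rightarrow> 'o \<Rightarrow> 'm" where
  "sov C U = ccomp C (tmor C (revd C U) (cid C (ldual C U)))
      (tmor C (cid C (rdual C U))
         (ccomp C (tmor C (ctw C U) (cid C (ldual C U))) (ccomp C (cbr C (ldual C U) U) (lcoev C U))))"

definition bracket3 :: "('o,'m) rcat \<Rightarrow> 'o \<Rightarrow> 'm \<Rightarrow> 'm" where
  "bracket3 C L l = ccomp C l (tmor C (cid C L) l)"

definition lie_algebra :: "('o,'m) rcat \<Rightarrow> 'o \<Rightarrow> 'm \<Rightarrow> bool" where
  "lie_algebra C L l \<longleftrightarrow>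
     l \<in> hom C (tobj C L L) L \<and>
     ccomp C l (cadd C (cid C (tobj C L L)) (cbr C L L)) = czero C (tobj C L L) L \<and>
     ccomp C (bracket3 C L l)
       (cadd C (cadd C (cid C (tobj C L (tobj C L L))) (cbr C (tobj C L L) L))
               (ccomp C (cbr C (tobj C L L) L) (cbr C (tobj C L L) L)))
       = czero C (tobj C L (tobj C L L)) L"

definition killing :: "('o,'m) rcat \<Rightarrow> 'o \<Rightarrow> 'm \<Rightarrow> 'm" where
  "killing C L l = ccomp C (lev C L)
      (ccomp C (tmor C (ccomp C (ctw C L) (bracket3 C L l)) (sov C L))
               (tmor C (cid C (tobj C L L)) (rcoev C L)))"

definition nondegenerate :: "('o,'m) rcat \<Rightarrow> 'o \<Rightarrow> 'm \<Rightarrow> bool" where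
  "nondegenerate C U w \<longleftrightarrow>
     (\<exists>w' \<in> hom C (cunit C) (tobj C U U).
        ccomp C (tmor C w (cid C U)) (tmor C (cid C U) w') = cid C U \<and>
        ccomp C (tmor C (cid C U) w) (tmor C w' (cid C U)) = cid C U)"

definition retract :: "('o,'m) rcat \<Rightarrow> 'o \<Rightarrow> 'o \<Rightarrow> 'm \<Rightarrow> 'm \<Rightarrow> bool" where
  "retract C L K e r \<longleftrightarrow> e \<in> hom C K L \<and> r \<in> hom C L K \<and> ccomp C r e = cid C K"

definition retract_ideal :: "('o,'m) rcat \<Rightarrow> 'o \<Rightarrow> 'm \<Rightarrow> 'o \<Rightarrow> 'm \<Rightarrow> 'm \<Rightarrow> bool" where
  "retract_ideal C L l K e r \<longleftrightarrow> retract C L K e r \<and>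
     ccomp C l (tmor C e (cid C L)) = ccomp C (ccomp C e r) (ccomp C l (tmor C e (cid C L)))"

definition abelian_retract_ideal :: "('o,'m) rcat \<Rightarrow> 'o \<Rightarrow> 'm \<Rightarrow> 'o \<Rightarrow> 'm \<Rightarrow> 'm \<Rightarrow> bool" where
  "abelian_retract_ideal C L l K e r \<longleftrightarrow> retract_ideal C L l K e r \<and>
     ccomp C l (tmor C e e) = czero C (tobj C K K) L"

end

theory Submission
  imports Defs
begin

text \<open>
  For x in K the operator z \<mapsto> [x,[y,z]] lands in K (K is an ideal) and kills K
  (K is Abelian and, by antisymmetry, also a right ideal).  Writing it as p \<circ> T with
  T \<circ> p = 0 for the idempotent p = e \<circ> r, cyclicity of the (partial, twisted) trace gives
  \<kappa>(x,y) = tr(p T) = tr(T p) = 0, so \<kappa> \<circ> (e \<otimes> id) = 0 and non-degeneracy forces e = 0.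
\<close>

context add_strict_sym_ribbon_cat begin

abbreviation cmp (infixr "\<cdot>" 55) where "g \<cdot> f \<equiv> ccomp C g f"
abbreviation tm (infixr "\<otimes>" 60) where "f \<otimes> g \<equiv> tmor C f g"
abbreviation idm where "idm A \<equiv> cid C A"

lemma dom_comp[simp]: "cdom C g = ccod C f \<Longrightarrow> cdom C (g \<cdot> f) = cdom C f"
  using comp_hom[of f "cdom C f" "ccod C f" g "ccod C g"] by (simp add: hom_def)
lemma cod_comp[simp]: "cdom C g = ccod C f \<Longrightarrow> ccod C (g \<cdot> f) = ccod C g"
  using comp_hom[of f "cdom C f" "ccod C f" g "ccod C g"] by (simp add: hom_def)
lemma dom_tm[simp]: "cdom C (f \<otimes> g) = tobj C (cdom C f) (cdom C g)"
  using tmor_hom[of f "cdom C f" "ccod C f" g "cdom C g" "ccod C g"] by (simp add: hom_def)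
lemma cod_tm[simp]: "ccod C (f \<otimes> g) = tobj C (ccod C f) (ccod C g)"
  using tmor_hom[of f "cdom C f" "ccod C f" g "cdom C g" "ccod C g"] by (simp add: hom_def)
lemma dom_id[simp]: "cdom C (idm A) = A" using id_hom[of A] by (simp add: hom_def)
lemma cod_id[simp]: "ccod C (idm A) = A" using id_hom[of A] by (simp add: hom_def)
lemma dom_br[simp]: "cdom C (cbr C A B) = tobj C A B" using br_hom[of A B] by (simp add: hom_def)
lemma cod_br[simp]: "ccod C (cbr C A B) = tobj C B A" using br_hom[of A B] by (simp add: hom_def)
lemma dom_tw[simp]: "cdom C (ctw C A) = A" using tw_hom[of A] by (simp add: hom_def)
lemma cod_tw[simp]: "ccod C (ctw C A) = A" using tw_hom[of A] by (simp add: hom_def)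
lemma dom_rcoev[simp]: "cdom C (rcoev C A) = cunit C" using rcoev_hom[of A] by (simp add: hom_def)
lemma cod_rcoev[simp]: "ccod C (rcoev C A) = tobj C A (rdual C A)" using rcoev_hom[of A] by (simp add: hom_def)
lemma dom_revd[simp]: "cdom C (revd C A) = tobj C (rdual C A) A" using rev_hom[of A] by (simp add: hom_def)
lemma cod_revd[simp]: "ccod C (revd C A) = cunit C" using rev_hom[of A] by (simp add: hom_def)
lemma dom_lcoev[simp]: "cdom C (lcoev C A) = cunit C" using lcoev_hom[of A] by (simp add: hom_def)
lemma cod_lcoev[simp]: "ccod C (lcoev C A) = tobj C (ldual C A) A" using lcoev_hom[of A] by (simp add: hom_def)
lemma dom_lev[simp]: "cdom C (lev C A) = tobj C A (ldual C A)" using lev_hom[of A] by (simp add: hom_def)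
lemma cod_lev[simp]: "ccod C (lev C A) = cunit C" using lev_hom[of A] by (simp add: hom_def)
lemma dom_zero[simp]: "cdom C (czero C A B) = A" using zero_hom[of A B] by (simp add: hom_def)
lemma cod_zero[simp]: "ccod C (czero C A B) = B" using zero_hom[of A B] by (simp add: hom_def)

lemma id_comp[simp]: "ccod C f = A \<Longrightarrow> idm A \<cdot> f = f" using comp_id_l by auto
lemma comp_id[simp]: "cdom C f = A \<Longrightarrow> f \<cdot> idm A = f" using comp_id_r by auto

declare tobj_assoc[simp] tobj_unit_l[simp] tobj_unit_r[simp]
  tmor_unit_l[simp] tmor_unit_r[simp] tmor_id[simp]

lemma tmor_comp:
  "cdom C f' = ccod C f \<Longrightarrow> cdom C g' = ccod C g \<Longrightarrow> (f' \<otimes> g') \<cdot> (f \<otimes> g) = (f' \<cdot> f) \<otimes> (g' \<cdot> g)"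
  using interchange[of f "cdom C f" "ccod C f" f' "ccod C f'" g "cdom C g" "ccod C g" g' "ccod C g'"]
  by (simp add: hom_def)

lemma comp_assoc': "cdom C g = ccod C f \<Longrightarrow> cdom C h = ccod C g \<Longrightarrow> (h \<cdot> g) \<cdot> f = h \<cdot> (g \<cdot> f)"
  using comp_assoc[of f "cdom C f" "ccod C f" g "ccod C g" h "ccod C h"] by (simp add: hom_def)

lemma tmor_factor_l: "f \<otimes> g = (f \<otimes> idm (ccod C g)) \<cdot> (idm (cdom C f) \<otimes> g)"
  by (subst tmor_comp) auto
lemma tmor_factor_r: "f \<otimes> g = (idm (ccod C f) \<otimes> g) \<cdot> (f \<otimes> idm (cdom C g))"
  by (subst tmor_comp) auto

lemma tmor_slide: "(f \<otimes> idm (ccod C g)) \<cdot> (idm (cdom C f) \<otimes> g) = (idm (ccod C f) \<otimes> g) \<cdot> (f \<otimes> idm (cdom C g))"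
  using tmor_factor_l[of f g] tmor_factor_r[of f g] by simp

lemma id_tmor_id: "idm A \<otimes> (idm B \<otimes> g) = idm (tobj C A B) \<otimes> g"
  by (metis tmor_assoc tmor_id)

lemma comp_tmor_id: "cdom C g = ccod C f \<Longrightarrow> (g \<cdot> f) \<otimes> idm A = (g \<otimes> idm A) \<cdot> (f \<otimes> idm A)"
  by (subst tmor_comp) auto
lemma id_tmor_comp: "cdom C g = ccod C f \<Longrightarrow> idm A \<otimes> (g \<cdot> f) = (idm A \<otimes> g) \<cdot> (idm A \<otimes> f)"
  by (subst tmor_comp) auto
lemma tmor_comp_assoc:
  "cdom C f' = ccod C f \<Longrightarrow> cdom C g' = ccod C g \<Longrightarrow> ccod C h = tobj C (cdom C f) (cdom C g) \<Longrightarrow>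
   (f' \<otimes> g') \<cdot> ((f \<otimes> g) \<cdot> h) = ((f' \<cdot> f) \<otimes> (g' \<cdot> g)) \<cdot> h"
  by (simp add: comp_assoc'[symmetric] tmor_comp)

lemmas comp_tmor_norm = comp_tmor_id id_tmor_comp tmor_assoc comp_assoc'

lemma br_natural: "cdom C f = A \<Longrightarrow> ccod C f = A' \<Longrightarrow> cdom C g = B \<Longrightarrow> ccod C g = B' \<Longrightarrow>
   cbr C A' B' \<cdot> (f \<otimes> g) = (g \<otimes> f) \<cdot> cbr C A B"
  using br_nat[of f A A' g B B'] by (simp add: hom_def)
lemma tw_natural: "cdom C f = A \<Longrightarrow> ccod C f = B \<Longrightarrow> ctw C B \<cdot> f = f \<cdot> ctw C A"
  using tw_nat[of f A B] by (simp add: hom_def)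

lemma idem_add_eq_zero:
  assumes x: "cdom C x = A" "ccod C x = B" and xx: "cadd C x x = x"
  shows "x = czero C A B"
proof -
  have h: "x \<in> hom C A B" using x by (simp add: hom_def)
  have "x = cadd C x (czero C A B)" using add_zero[OF h] by simp
  also have "\<dots> = cadd C x (cadd C x (cneg C x))" using add_neg[OF h] by simp
  also have "\<dots> = cadd C (cadd C x x) (cneg C x)" using add_assoc[OF h h neg_hom[OF h]] by simp
  also have "\<dots> = czero C A B" using xx add_neg[OF h] by simp
  finally show ?thesis .
qed

lemma zero_comp[simp]:
  assumes "cdom C f = A" "ccod C f = B" shows "czero C B D \<cdot> f = czero C A D"
proof -
  have z: "czero C B D \<in> hom C B D" by (rule zero_hom)
  have "czero C B D \<cdot> f = cadd C (czero C B D) (czero C B D) \<cdot> f" using add_zero[OF z] by simp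
  also have "\<dots> = cadd C (czero C B D \<cdot> f) (czero C B D \<cdot> f)"
    using comp_add_r[OF z z] assms by (simp add: hom_def)
  finally show ?thesis using assms by (intro idem_add_eq_zero) auto
qed

lemma comp_zero[simp]:
  assumes "cdom C g = B" "ccod C g = D" shows "g \<cdot> czero C A B = czero C A D"
proof -
  have z: "czero C A B \<in> hom C A B" by (rule zero_hom)
  have "g \<cdot> czero C A B = g \<cdot> cadd C (czero C A B) (czero C A B)" using add_zero[OF z] by simp
  also have "\<dots> = cadd C (g \<cdot> czero C A B) (g \<cdot> czero C A B)"
    using comp_add_l[OF z z] assms by (simp add: hom_def)
  finally show ?thesis using assms by (intro idem_add_eq_zero) auto
qed

lemma zero_tmor[simp]: "czero C A B \<otimes> h = czero C (tobj C A (cdom C h)) (tobj C B (ccod C h))"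
proof -
  have z: "czero C A B \<in> hom C A B" by (rule zero_hom)
  have "czero C A B \<otimes> h = cadd C (czero C A B) (czero C A B) \<otimes> h" using add_zero[OF z] by simp
  also have "\<dots> = cadd C (czero C A B \<otimes> h) (czero C A B \<otimes> h)" using tmor_add_l[OF z z] .
  finally show ?thesis by (intro idem_add_eq_zero) auto
qed

lemma add_eq_zero_unique:
  assumes h: "a \<in> hom C A B" "b \<in> hom C A B" "c \<in> hom C A B"
    and ab: "cadd C a b = czero C A B" and cb: "cadd C c b = czero C A B"
  shows "a = c"
proof -
  have "a = cadd C a (czero C A B)" using add_zero[OF h(1)] by simp
  also have "\<dots> = cadd C a (cadd C b c)" using cb add_comm[OF h(3) h(2)] by simp
  also have "\<dots> = cadd C (cadd C a b) c" using add_assoc[OF h] by simp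
  also have "\<dots> = cadd C c (czero C A B)" using ab add_comm[OF zero_hom h(3)] by simp
  also have "\<dots> = c" using add_zero[OF h(3)] .
  finally show ?thesis .
qed

definition ldual_mor :: "'o \<Rightarrow> 'm \<Rightarrow> 'm" where
  "ldual_mor U f = (idm (ldual C U) \<otimes> lev C U) \<cdot>
     ((idm (ldual C U) \<otimes> f \<otimes> idm (ldual C U)) \<cdot> (lcoev C U \<otimes> idm (ldual C U)))"

lemma ldual_mor_dom[simp]: "cdom C f = U \<Longrightarrow> ccod C f = U \<Longrightarrow> cdom C (ldual_mor U f) = ldual C U"
  unfolding ldual_mor_def by simp
lemma ldual_mor_cod[simp]: "cdom C f = U \<Longrightarrow> ccod C f = U \<Longrightarrow> ccod C (ldual_mor U f) = ldual C U"
  unfolding ldual_mor_def by simp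

lemma ldual_mor_lcoev:
  assumes f: "cdom C f = U" "ccod C f = U"
  shows "(ldual_mor U f \<otimes> idm U) \<cdot> lcoev C U = (idm (ldual C U) \<otimes> f) \<cdot> lcoev C U"
proof -
  let ?D = "ldual C U"
  have expand: "ldual_mor U f \<otimes> idm U = (idm ?D \<otimes> lev C U \<otimes> idm U) \<cdot>
      ((idm ?D \<otimes> f \<otimes> idm (tobj C ?D U)) \<cdot> (lcoev C U \<otimes> idm (tobj C ?D U)))"
    unfolding ldual_mor_def using f by (simp add: comp_tmor_id tmor_assoc)
  have coev_coev: "(lcoev C U \<otimes> idm (tobj C ?D U)) \<cdot> lcoev C U = (idm ?D \<otimes> idm U \<otimes> lcoev C U) \<cdot> lcoev C U"
    using tmor_factor_l[of "lcoev C U" "lcoev C U"] tmor_factor_r[of "lcoev C U" "lcoev C U"]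
    by (simp add: id_tmor_id)
  have snake: "(lev C U \<otimes> idm U) \<cdot> ((f \<otimes> idm (tobj C ?D U)) \<cdot> (idm U \<otimes> lcoev C U)) = f"
  proof -
    have "(f \<otimes> idm (tobj C ?D U)) \<cdot> (idm U \<otimes> lcoev C U) = (idm U \<otimes> lcoev C U) \<cdot> f"
      using tmor_factor_l[of f "lcoev C U"] tmor_factor_r[of f "lcoev C U"] f by simp
    then show ?thesis using lsnake1[of U] f by (simp add: comp_assoc'[symmetric])
  qed
  have "(ldual_mor U f \<otimes> idm U) \<cdot> lcoev C U = (idm ?D \<otimes> lev C U \<otimes> idm U) \<cdot>
      ((idm ?D \<otimes> f \<otimes> idm (tobj C ?D U)) \<cdot> ((idm ?D \<otimes> idm U \<otimes> lcoev C U) \<cdot> lcoev C U))"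
    using expand coev_coev f by (simp add: comp_assoc')
  also have "\<dots> = (idm ?D \<otimes> ((lev C U \<otimes> idm U) \<cdot>
      ((f \<otimes> idm (tobj C ?D U)) \<cdot> (idm U \<otimes> lcoev C U)))) \<cdot> lcoev C U"
    using f by (simp add: tmor_comp_assoc del: tmor_id)
  also have "\<dots> = (idm ?D \<otimes> f) \<cdot> lcoev C U" using snake by simp
  finally show ?thesis .
qed

lemma lev_ldual_mor:
  assumes f: "cdom C f = U" "ccod C f = U"
  shows "lev C U \<cdot> (f \<otimes> idm (ldual C U)) = lev C U \<cdot> (idm U \<otimes> ldual_mor U f)"
proof -
  let ?D = "ldual C U"
  have "lev C U \<cdot> (idm U \<otimes> ldual_mor U f) = (lev C U \<cdot> (idm (tobj C U ?D) \<otimes> lev C U)) \<cdot>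
      ((idm U \<otimes> idm ?D \<otimes> f \<otimes> idm ?D) \<cdot> (idm U \<otimes> lcoev C U \<otimes> idm ?D))"
    unfolding ldual_mor_def using f by (simp add: comp_tmor_norm id_tmor_id)
  also have "lev C U \<cdot> (idm (tobj C U ?D) \<otimes> lev C U) = lev C U \<cdot> (lev C U \<otimes> idm (tobj C U ?D))"
    using tmor_factor_l[of "lev C U" "lev C U"] tmor_factor_r[of "lev C U" "lev C U"] by simp
  also have "(lev C U \<cdot> (lev C U \<otimes> idm (tobj C U ?D))) \<cdot>
      ((idm U \<otimes> idm ?D \<otimes> f \<otimes> idm ?D) \<cdot> (idm U \<otimes> lcoev C U \<otimes> idm ?D))
     = lev C U \<cdot> (((lev C U \<otimes> idm U) \<cdot> ((idm (tobj C U ?D) \<otimes> f) \<cdot> (idm U \<otimes> lcoev C U))) \<otimes> idm ?D)"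
    using f by (simp add: comp_tmor_norm id_tmor_id)
  also have "(lev C U \<otimes> idm U) \<cdot> ((idm (tobj C U ?D) \<otimes> f) \<cdot> (idm U \<otimes> lcoev C U)) = f"
  proof -
    have "(lev C U \<otimes> idm U) \<cdot> (idm (tobj C U ?D) \<otimes> f) = f \<cdot> (lev C U \<otimes> idm U)"
      using tmor_slide[of "lev C U" f] f by simp
    then show ?thesis using f lsnake1[of U] by (simp add: comp_assoc'[symmetric]) (simp add: comp_assoc')
  qed
  finally show ?thesis ..
qed

lemma dual_mor_endo:
  assumes f: "cdom C f = U" "ccod C f = U"
  shows "dual_mor C f = (revd C U \<otimes> idm (rdual C U)) \<cdot>
    ((idm (rdual C U) \<otimes> f \<otimes> idm (rdual C U)) \<cdot> (idm (rdual C U) \<otimes> rcoev C U))"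
  unfolding dual_mor_def Let_def using f by simp

lemma dual_mor_dom[simp]: "cdom C f = U \<Longrightarrow> ccod C f = U \<Longrightarrow> cdom C (dual_mor C f) = rdual C U"
  by (simp add: dual_mor_endo)
lemma dual_mor_cod[simp]: "cdom C f = U \<Longrightarrow> ccod C f = U \<Longrightarrow> ccod C (dual_mor C f) = rdual C U"
  by (simp add: dual_mor_endo)

lemma dual_mor_rcoev:
  assumes f: "cdom C f = U" "ccod C f = U"
  shows "(idm U \<otimes> dual_mor C f) \<cdot> rcoev C U = (f \<otimes> idm (rdual C U)) \<cdot> rcoev C U"
proof -
  let ?V = "rdual C U"
  have "(idm U \<otimes> dual_mor C f) \<cdot> rcoev C U = (idm U \<otimes> revd C U \<otimes> idm ?V) \<cdot>
      ((idm (tobj C U ?V) \<otimes> f \<otimes> idm ?V) \<cdot> ((idm (tobj C U ?V) \<otimes> rcoev C U) \<cdot> rcoev C U))"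
    unfolding dual_mor_endo[OF f] using f by (simp add: comp_tmor_norm id_tmor_id)
  also have "(idm (tobj C U ?V) \<otimes> rcoev C U) \<cdot> rcoev C U = (rcoev C U \<otimes> idm (tobj C U ?V)) \<cdot> rcoev C U"
    using tmor_factor_l[of "rcoev C U" "rcoev C U"] tmor_factor_r[of "rcoev C U" "rcoev C U"] by simp
  also have "(idm (tobj C U ?V) \<otimes> f \<otimes> idm ?V) \<cdot> ((rcoev C U \<otimes> idm (tobj C U ?V)) \<cdot> rcoev C U)
     = (rcoev C U \<otimes> idm (tobj C U ?V)) \<cdot> ((f \<otimes> idm ?V) \<cdot> rcoev C U)"
  proof -
    have "(idm (tobj C U ?V) \<otimes> f \<otimes> idm ?V) \<cdot> (rcoev C U \<otimes> idm (tobj C U ?V))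
        = (rcoev C U \<otimes> idm (tobj C U ?V)) \<cdot> (f \<otimes> idm ?V)"
      using tmor_slide[of "rcoev C U" "f \<otimes> idm ?V"] f by simp
    then show ?thesis using f by (simp add: comp_assoc'[symmetric])
  qed
  also have "(idm U \<otimes> revd C U \<otimes> idm ?V) \<cdot> ((rcoev C U \<otimes> idm (tobj C U ?V)) \<cdot> ((f \<otimes> idm ?V) \<cdot> rcoev C U))
      = (((idm U \<otimes> revd C U) \<cdot> (rcoev C U \<otimes> idm U)) \<otimes> idm ?V) \<cdot> ((f \<otimes> idm ?V) \<cdot> rcoev C U)"
    using f by (simp add: comp_tmor_norm)
  also have "\<dots> = (f \<otimes> idm ?V) \<cdot> rcoev C U" using f rsnake1[of U] by simp
  finally show ?thesis .
qed

lemma revd_dual_mor: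
  assumes f: "cdom C f = U" "ccod C f = U"
  shows "revd C U \<cdot> (dual_mor C f \<otimes> idm U) = revd C U \<cdot> (idm (rdual C U) \<otimes> f)"
proof -
  let ?V = "rdual C U"
  have "revd C U \<cdot> (dual_mor C f \<otimes> idm U) = (revd C U \<cdot> (revd C U \<otimes> idm (tobj C ?V U))) \<cdot>
      ((idm ?V \<otimes> f \<otimes> idm (tobj C ?V U)) \<cdot> (idm ?V \<otimes> rcoev C U \<otimes> idm U))"
    unfolding dual_mor_endo[OF f] using f by (simp add: comp_tmor_norm id_tmor_id)
  also have "revd C U \<cdot> (revd C U \<otimes> idm (tobj C ?V U)) = revd C U \<cdot> (idm (tobj C ?V U) \<otimes> revd C U)"
    using tmor_factor_l[of "revd C U" "revd C U"] tmor_factor_r[of "revd C U" "revd C U"] by simp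
  also have "(revd C U \<cdot> (idm (tobj C ?V U) \<otimes> revd C U)) \<cdot>
      ((idm ?V \<otimes> f \<otimes> idm (tobj C ?V U)) \<cdot> (idm ?V \<otimes> rcoev C U \<otimes> idm U))
     = revd C U \<cdot> (idm ?V \<otimes> ((idm U \<otimes> revd C U) \<cdot> ((f \<otimes> idm (tobj C ?V U)) \<cdot> (rcoev C U \<otimes> idm U))))"
    using f by (simp add: comp_tmor_norm id_tmor_id)
  also have "(idm U \<otimes> revd C U) \<cdot> ((f \<otimes> idm (tobj C ?V U)) \<cdot> (rcoev C U \<otimes> idm U)) = f"
  proof -
    have "(idm U \<otimes> revd C U) \<cdot> (f \<otimes> idm (tobj C ?V U)) = f \<cdot> (idm U \<otimes> revd C U)"
      using tmor_slide[of f "revd C U"] f by simp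
    then show ?thesis using f rsnake1[of U] by (simp add: comp_assoc'[symmetric]) (simp add: comp_assoc')
  qed
  finally show ?thesis .
qed

definition twisted_lcoev :: "'o \<Rightarrow> 'm" where
  "twisted_lcoev U = (ctw C U \<otimes> idm (ldual C U)) \<cdot> (cbr C (ldual C U) U \<cdot> lcoev C U)"

lemma twisted_lcoev_dom[simp]: "cdom C (twisted_lcoev U) = cunit C"
  unfolding twisted_lcoev_def by simp
lemma twisted_lcoev_cod[simp]: "ccod C (twisted_lcoev U) = tobj C U (ldual C U)"
  unfolding twisted_lcoev_def by simp

lemma sov_twisted_lcoev: "sov C U = (revd C U \<otimes> idm (ldual C U)) \<cdot> (idm (rdual C U) \<otimes> twisted_lcoev U)"
  unfolding sov_def twisted_lcoev_def by simp

lemma sov_dom[simp]: "cdom C (sov C U) = rdual C U" unfolding sov_def by simp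
lemma sov_cod[simp]: "ccod C (sov C U) = ldual C U" unfolding sov_def by simp

lemma twisted_lcoev_natural:
  assumes f: "cdom C f = U" "ccod C f = U"
  shows "(f \<otimes> idm (ldual C U)) \<cdot> twisted_lcoev U = (idm U \<otimes> ldual_mor U f) \<cdot> twisted_lcoev U"
proof -
  let ?D = "ldual C U" and ?g = "ldual_mor U f"
  have "(idm U \<otimes> ?g) \<cdot> twisted_lcoev U = (ctw C U \<otimes> idm ?D) \<cdot> ((idm U \<otimes> ?g) \<cdot> (cbr C ?D U \<cdot> lcoev C U))"
    unfolding twisted_lcoev_def using tmor_slide[of "ctw C U" ?g] f by (simp add: comp_assoc'[symmetric])
  also have "(idm U \<otimes> ?g) \<cdot> (cbr C ?D U \<cdot> lcoev C U) = cbr C ?D U \<cdot> ((?g \<otimes> idm U) \<cdot> lcoev C U)"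
    using br_natural[of ?g ?D ?D "idm U" U U] f by (simp add: comp_assoc'[symmetric])
  also have "(?g \<otimes> idm U) \<cdot> lcoev C U = (idm ?D \<otimes> f) \<cdot> lcoev C U"
    using ldual_mor_lcoev[OF f] by simp
  also have "cbr C ?D U \<cdot> ((idm ?D \<otimes> f) \<cdot> lcoev C U) = (f \<otimes> idm ?D) \<cdot> (cbr C ?D U \<cdot> lcoev C U)"
    using br_natural[of "idm ?D" ?D ?D f U U] f by (simp add: comp_assoc'[symmetric])
  also have "(ctw C U \<otimes> idm ?D) \<cdot> ((f \<otimes> idm ?D) \<cdot> (cbr C ?D U \<cdot> lcoev C U)) = (f \<otimes> idm ?D) \<cdot> twisted_lcoev U"
  proof -
    have "(ctw C U \<otimes> idm ?D) \<cdot> (f \<otimes> idm ?D) = (f \<otimes> idm ?D) \<cdot> (ctw C U \<otimes> idm ?D)"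
      using f tw_natural[of f U U] by (simp add: tmor_comp)
    then show ?thesis unfolding twisted_lcoev_def using f by (simp add: comp_assoc'[symmetric])
  qed
  finally show ?thesis ..
qed

lemma sov_natural:
  assumes f: "cdom C f = U" "ccod C f = U"
  shows "ldual_mor U f \<cdot> sov C U = sov C U \<cdot> dual_mor C f"
proof -
  let ?D = "ldual C U" and ?V = "rdual C U" and ?g = "ldual_mor U f" and ?h = "dual_mor C f"
    and ?t = "twisted_lcoev U"
  have "?g \<cdot> sov C U = (revd C U \<otimes> idm ?D) \<cdot> ((idm (tobj C ?V U) \<otimes> ?g) \<cdot> (idm ?V \<otimes> ?t))"
    unfolding sov_twisted_lcoev using tmor_slide[of "revd C U" ?g] f by (simp add: comp_assoc'[symmetric])
  also have "(idm (tobj C ?V U) \<otimes> ?g) \<cdot> (idm ?V \<otimes> ?t) = idm ?V \<otimes> ((idm U \<otimes> ?g) \<cdot> ?t)"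
    using f by (simp add: comp_tmor_norm id_tmor_id)
  also have "\<dots> = (idm ?V \<otimes> f \<otimes> idm ?D) \<cdot> (idm ?V \<otimes> ?t)"
    by (subst twisted_lcoev_natural[OF f, symmetric]) (simp add: comp_tmor_norm f)
  also have "(revd C U \<otimes> idm ?D) \<cdot> ((idm ?V \<otimes> f \<otimes> idm ?D) \<cdot> (idm ?V \<otimes> ?t))
      = ((revd C U \<cdot> (idm ?V \<otimes> f)) \<otimes> idm ?D) \<cdot> (idm ?V \<otimes> ?t)"
    using f by (simp add: comp_tmor_norm)
  also have "\<dots> = ((revd C U \<cdot> (?h \<otimes> idm U)) \<otimes> idm ?D) \<cdot> (idm ?V \<otimes> ?t)"
    using revd_dual_mor[OF f] by simp
  also have "\<dots> = (revd C U \<otimes> idm ?D) \<cdot> ((?h \<otimes> idm (tobj C U ?D)) \<cdot> (idm ?V \<otimes> ?t))"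
    using f by (simp add: comp_tmor_norm)
  also have "\<dots> = sov C U \<cdot> ?h"
    unfolding sov_twisted_lcoev using tmor_slide[of ?h ?t] f by (simp add: comp_assoc')
  finally show ?thesis .
qed

lemma lev_tmor_sov:
  assumes f: "cdom C f = U" "ccod C f = U"
  shows "lev C U \<cdot> (f \<otimes> sov C U) = lev C U \<cdot> (idm U \<otimes> (sov C U \<cdot> dual_mor C f))"
proof -
  have "lev C U \<cdot> (f \<otimes> sov C U) = (lev C U \<cdot> (f \<otimes> idm (ldual C U))) \<cdot> (idm U \<otimes> sov C U)"
    using tmor_factor_l[of f "sov C U"] f by (simp add: comp_assoc')
  also have "\<dots> = (lev C U \<cdot> (idm U \<otimes> ldual_mor U f)) \<cdot> (idm U \<otimes> sov C U)"
    using lev_ldual_mor[OF f] by simp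
  also have "\<dots> = lev C U \<cdot> (idm U \<otimes> (ldual_mor U f \<cdot> sov C U))"
    using f by (simp add: comp_assoc' id_tmor_comp)
  also have "\<dots> = lev C U \<cdot> (idm U \<otimes> (sov C U \<cdot> dual_mor C f))" using sov_natural[OF f] by simp
  finally show ?thesis .
qed

definition ptrace :: "'o \<Rightarrow> 'o \<Rightarrow> 'm \<Rightarrow> 'm" where
  "ptrace X U T = lev C U \<cdot> ((T \<otimes> sov C U) \<cdot> (idm X \<otimes> rcoev C U))"

lemma killing_eq_ptrace: "killing C L l = ptrace (tobj C L L) L (ctw C L \<cdot> bracket3 C L l)"
  unfolding killing_def ptrace_def ..

lemma ptrace_factor:
  assumes "cdom C T = tobj C X U" "ccod C T = U"
  shows "ptrace X U T = (lev C U \<cdot> (idm U \<otimes> sov C U)) \<cdot> ((T \<otimes> idm (rdual C U)) \<cdot> (idm X \<otimes> rcoev C U))"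
  unfolding ptrace_def using assms tmor_factor_r[of T "sov C U"] by (simp add: comp_assoc')

lemma ptrace_cyclic:
  assumes T: "cdom C T = tobj C X U" "ccod C T = U" and p: "cdom C p = U" "ccod C p = U"
  shows "ptrace X U (p \<cdot> T) = ptrace X U (T \<cdot> (idm X \<otimes> p))"
proof -
  let ?V = "rdual C U" and ?S = "lev C U \<cdot> (idm U \<otimes> sov C U)" and ?b = "idm X \<otimes> rcoev C U"
  have pT: "(p \<cdot> T) \<otimes> idm ?V = (p \<otimes> idm ?V) \<cdot> (T \<otimes> idm ?V)"
    using T p by (simp add: comp_tmor_id)
  have "ptrace X U (p \<cdot> T) = ?S \<cdot> ((p \<otimes> idm ?V) \<cdot> ((T \<otimes> idm ?V) \<cdot> ?b))"
    using ptrace_factor[of "p \<cdot> T" X U] p T by (simp add: pT comp_assoc')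
  also have "\<dots> = (lev C U \<cdot> (p \<otimes> sov C U)) \<cdot> ((T \<otimes> idm ?V) \<cdot> ?b)"
    using p T tmor_factor_r[of p "sov C U"] by (simp add: comp_assoc')
  also have "\<dots> = ?S \<cdot> ((idm U \<otimes> dual_mor C p) \<cdot> ((T \<otimes> idm ?V) \<cdot> ?b))"
    unfolding lev_tmor_sov[OF p] using p T by (simp add: comp_assoc' id_tmor_comp)
  also have "(idm U \<otimes> dual_mor C p) \<cdot> ((T \<otimes> idm ?V) \<cdot> ?b)
      = (T \<otimes> idm ?V) \<cdot> (idm X \<otimes> ((idm U \<otimes> dual_mor C p) \<cdot> rcoev C U))"
  proof -
    have "(idm U \<otimes> dual_mor C p) \<cdot> ((T \<otimes> idm ?V) \<cdot> ?b) = ((idm U \<otimes> dual_mor C p) \<cdot> (T \<otimes> idm ?V)) \<cdot> ?b"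
      using p T by (simp add: comp_assoc')
    also have "(idm U \<otimes> dual_mor C p) \<cdot> (T \<otimes> idm ?V) = (T \<otimes> idm ?V) \<cdot> (idm (tobj C X U) \<otimes> dual_mor C p)"
      using tmor_slide[of T "dual_mor C p"] p T by simp
    also have "\<dots> \<cdot> ?b = (T \<otimes> idm ?V) \<cdot> ((idm (tobj C X U) \<otimes> dual_mor C p) \<cdot> ?b)"
      using p T by (simp add: comp_assoc')
    also have "(idm (tobj C X U) \<otimes> dual_mor C p) \<cdot> ?b = idm X \<otimes> ((idm U \<otimes> dual_mor C p) \<cdot> rcoev C U)"
      using p by (subst id_tmor_comp) (simp_all add: id_tmor_id)
    finally show ?thesis .
  qed
  also have "\<dots> = ((T \<cdot> (idm X \<otimes> p)) \<otimes> idm ?V) \<cdot> ?b"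
    unfolding dual_mor_rcoev[OF p] using p T
    by (simp add: comp_tmor_norm id_tmor_id)
  finally show ?thesis using ptrace_factor[of "T \<cdot> (idm X \<otimes> p)" X U] p T by simp
qed

lemma ptrace_comp_tmor_id:
  assumes T: "cdom C T = tobj C X U" "ccod C T = U" and f: "cdom C f = Y" "ccod C f = X"
  shows "ptrace X U T \<cdot> f = ptrace Y U (T \<cdot> (f \<otimes> idm U))"
proof -
  let ?V = "rdual C U"
  have "(idm X \<otimes> rcoev C U) \<cdot> f = ((f \<otimes> idm U) \<otimes> idm ?V) \<cdot> (idm Y \<otimes> rcoev C U)"
    using tmor_slide[of f "rcoev C U"] f by (simp add: tmor_assoc)
  then show ?thesis
    unfolding ptrace_def using T f by (simp add: comp_assoc' tmor_comp_assoc del: tmor_id)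
qed

lemma ptrace_zero: "ptrace X U (czero C (tobj C X U) U) = czero C X (cunit C)"
  unfolding ptrace_def by simp

lemma nondegenerate_kernel_zero:
  assumes nd: "nondegenerate C U w" and w: "cdom C w = tobj C U U" "ccod C w = cunit C"
    and f: "cdom C f = K" "ccod C f = U" and wf: "w \<cdot> (f \<otimes> idm U) = czero C (tobj C K U) (cunit C)"
  shows "f = czero C K U"
proof -
  obtain w' where w': "cdom C w' = cunit C" "ccod C w' = tobj C U U"
    and snake: "(w \<otimes> idm U) \<cdot> (idm U \<otimes> w') = idm U"
    using nd unfolding nondegenerate_def hom_def by blast
  have "f = ((w \<otimes> idm U) \<cdot> (idm U \<otimes> w')) \<cdot> f" using snake f by simp
  also have "\<dots> = (w \<otimes> idm U) \<cdot> (((f \<otimes> idm U) \<otimes> idm U) \<cdot> (idm K \<otimes> w'))"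
    using tmor_slide[of f w'] f w' w by (simp add: comp_assoc' tmor_assoc)
  also have "\<dots> = ((w \<cdot> (f \<otimes> idm U)) \<otimes> idm U) \<cdot> (idm K \<otimes> w')"
    using f w w' by (simp add: comp_assoc'[symmetric] tmor_comp del: tmor_id)
  also have "\<dots> = czero C K U" unfolding wf using w' by simp
  finally show ?thesis .
qed

lemma retract_ideal_right:
  assumes l: "cdom C l = tobj C L L" "ccod C l = L"
    and anti: "l \<cdot> cadd C (idm (tobj C L L)) (cbr C L L) = czero C (tobj C L L) L"
    and ideal: "retract_ideal C L l K e r"
  shows "l \<cdot> (idm L \<otimes> e) = (e \<cdot> r) \<cdot> (l \<cdot> (idm L \<otimes> e))"
proof -
  have e: "cdom C e = K" "ccod C e = L" and r: "cdom C r = L" "ccod C r = K"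
    and left: "l \<cdot> (e \<otimes> idm L) = (e \<cdot> r) \<cdot> (l \<cdot> (e \<otimes> idm L))"
    using ideal unfolding retract_ideal_def retract_def hom_def by auto
  let ?p = "e \<cdot> r" and ?a = "l \<cdot> (idm L \<otimes> e)" and ?b = "l \<cdot> (cbr C L L \<cdot> (idm L \<otimes> e))"
  have lH: "l \<in> hom C (tobj C L L) L" and pH: "?p \<in> hom C L L"
    and aH: "?a \<in> hom C (tobj C L K) L" and bH: "?b \<in> hom C (tobj C L K) L"
    and paH: "?p \<cdot> ?a \<in> hom C (tobj C L K) L"
    using l e r by (simp_all add: hom_def)
  have a_plus_b: "cadd C ?a ?b = czero C (tobj C L K) L"
  proof -
    have "czero C (tobj C L K) L = cadd C l (l \<cdot> cbr C L L) \<cdot> (idm L \<otimes> e)"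
      using anti comp_add_l[OF id_hom br_hom lH] l e by simp
    also have "\<dots> = cadd C ?a ?b"
      using comp_add_r[OF lH _, of "l \<cdot> cbr C L L" "idm L \<otimes> e" "tobj C L K"] l e
      by (simp add: hom_def comp_assoc')
    finally show ?thesis ..
  qed
  have b_flip: "?b = (l \<cdot> (e \<otimes> idm L)) \<cdot> cbr C L K"
    using br_natural[of "idm L" L L e K L] e l by (simp add: comp_assoc')
  have b_in_ideal: "?b = ?p \<cdot> ?b"
  proof -
    have "?b = (?p \<cdot> (l \<cdot> (e \<otimes> idm L))) \<cdot> cbr C L K"
      unfolding b_flip by (simp only: left[symmetric])
    then show ?thesis using b_flip e r l by (simp add: comp_assoc')
  qed
  have "cadd C (?p \<cdot> ?a) ?b = ?p \<cdot> cadd C ?a ?b"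
    using comp_add_l[OF aH bH pH] b_in_ideal by metis
  also have "\<dots> = czero C (tobj C L K) L" using a_plus_b e r by simp
  finally show ?thesis using add_eq_zero_unique[OF aH bH paH a_plus_b] by blast
qed

lemma bracket_abelian_ideal_bracket:
  assumes l: "cdom C l = tobj C L L" "ccod C l = L"
    and anti: "l \<cdot> cadd C (idm (tobj C L L)) (cbr C L L) = czero C (tobj C L L) L"
    and ideal: "abelian_retract_ideal C L l K e r"
  shows "l \<cdot> ((e \<otimes> idm L) \<cdot> (idm K \<otimes> (l \<cdot> (idm L \<otimes> (e \<cdot> r))))) = czero C (tobj C K (tobj C L L)) L"
proof -
  have e: "cdom C e = K" "ccod C e = L" and r: "cdom C r = L" "ccod C r = K"
    and abelian: "l \<cdot> (e \<otimes> e) = czero C (tobj C K K) L"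
    using ideal unfolding abelian_retract_ideal_def retract_ideal_def retract_def hom_def by auto
  define W where "W = r \<cdot> ((l \<cdot> (idm L \<otimes> e)) \<cdot> (idm L \<otimes> r))"
  have W: "cdom C W = tobj C L L" "ccod C W = K" unfolding W_def using l e r by auto
  have "l \<cdot> (idm L \<otimes> (e \<cdot> r)) = (l \<cdot> (idm L \<otimes> e)) \<cdot> (idm L \<otimes> r)"
    using l e r by (simp add: comp_assoc' id_tmor_comp)
  also have "\<dots> = ((e \<cdot> r) \<cdot> (l \<cdot> (idm L \<otimes> e))) \<cdot> (idm L \<otimes> r)"
    using retract_ideal_right[OF l anti] ideal unfolding abelian_retract_ideal_def
    by (metis (no_types))
  also have "\<dots> = e \<cdot> W" unfolding W_def using l e r by (simp add: comp_assoc')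
  finally have "l \<cdot> ((e \<otimes> idm L) \<cdot> (idm K \<otimes> (l \<cdot> (idm L \<otimes> (e \<cdot> r)))))
      = (l \<cdot> ((e \<otimes> idm L) \<cdot> (idm K \<otimes> e))) \<cdot> (idm K \<otimes> W)"
    using l e r W by (simp add: comp_assoc' id_tmor_comp)
  also have "(e \<otimes> idm L) \<cdot> (idm K \<otimes> e) = e \<otimes> e" using tmor_factor_l[of e e] e by simp
  finally show ?thesis using abelian W by simp
qed

lemma killing_abelian_ideal:
  assumes lie: "lie_algebra C L l" and ideal: "abelian_retract_ideal C L l K e r"
  shows "killing C L l \<cdot> (e \<otimes> idm L) = czero C (tobj C K L) (cunit C)"
proof -
  have l: "cdom C l = tobj C L L" "ccod C l = L"
    and anti: "l \<cdot> cadd C (idm (tobj C L L)) (cbr C L L) = czero C (tobj C L L) L"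
    using lie unfolding lie_algebra_def hom_def by auto
  have e: "cdom C e = K" "ccod C e = L" and r: "cdom C r = L" "ccod C r = K"
    and left: "l \<cdot> (e \<otimes> idm L) = (e \<cdot> r) \<cdot> (l \<cdot> (e \<otimes> idm L))"
    using ideal unfolding abelian_retract_ideal_def retract_ideal_def retract_def hom_def by auto
  let ?p = "e \<cdot> r" and ?KL = "tobj C K L"
  define G where "G = (l \<cdot> (e \<otimes> idm L)) \<cdot> (idm K \<otimes> l)"
  define T where "T = ctw C L \<cdot> G"
  have G: "cdom C G = tobj C ?KL L" "ccod C G = L" unfolding G_def using l e by auto
  have T: "cdom C T = tobj C ?KL L" "ccod C T = L" and p: "cdom C ?p = L" "ccod C ?p = L"
    unfolding T_def using G e r by auto
  have "(ctw C L \<cdot> bracket3 C L l) \<cdot> ((e \<otimes> idm L) \<otimes> idm L) = ctw C L \<cdot> G"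
    using tmor_slide[of e l] l e unfolding bracket3_def G_def by (simp add: comp_assoc' tmor_assoc)
  also have "G = ?p \<cdot> G"
    unfolding G_def using l e r by (subst left) (simp add: comp_assoc')
  also have "ctw C L \<cdot> (?p \<cdot> G) = ?p \<cdot> T"
    unfolding T_def using tw_natural[of ?p L L] p G by (simp add: comp_assoc'[symmetric])
  finally have "killing C L l \<cdot> (e \<otimes> idm L) = ptrace ?KL L (?p \<cdot> T)"
    unfolding killing_eq_ptrace using l e unfolding bracket3_def
    by (subst ptrace_comp_tmor_id) auto
  also have "\<dots> = ptrace ?KL L (T \<cdot> (idm ?KL \<otimes> ?p))" using ptrace_cyclic[OF T p] .
  also have "T \<cdot> (idm ?KL \<otimes> ?p) = czero C (tobj C ?KL L) L"
    using bracket_abelian_ideal_bracket[OF l anti ideal] l e r unfolding T_def G_def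
    by (simp add: comp_assoc' id_tmor_id[symmetric] tmor_comp del: tmor_id)
  finally show ?thesis using ptrace_zero[of ?KL L] by simp
qed

end

theorem mainTheorem8:
  fixes C :: "('o,'m) rcat" and L K :: 'o and l e r :: 'm
  assumes "add_strict_sym_ribbon_cat C"
    and "lie_algebra C L l"
    and "nondegenerate C L (killing C L l)"
    and "abelian_retract_ideal C L l K e r"
  shows "e = czero C K L"
proof -
  interpret add_strict_sym_ribbon_cat C by fact
  have l: "cdom C l = tobj C L L" "ccod C l = L"
    using \<open>lie_algebra C L l\<close> unfolding lie_algebra_def hom_def by auto
  have e: "cdom C e = K" "ccod C e = L"
    using \<open>abelian_retract_ideal C L l K e r\<close>
    unfolding abelian_retract_ideal_def retract_ideal_def retract_def hom_def by auto
  have "cdom C (killing C L l) = tobj C L L" "ccod C (killing C L l) = cunit C"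
    unfolding killing_def bracket3_def using l by auto
  from nondegenerate_kernel_zero[OF assms(3) this e killing_abelian_ideal[OF assms(2,4)]]
  show ?thesis .
qed

end
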